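(* For every positive integer $k$ there exists a finite-dimensional real $k$-step nilpotent Lie algebra carrying an abelian hypercomplex structure. Concretely, if $A$ is the complex commutative algebra of $(k+1)\times(k+1)$ complex upper triangular Toeplitz matrices with zero diagonal (matrices whose $(p,q)$ entry is $a_{q-p}$ for $q>p$ and $0$ otherwise, with $a_1,\dots,a_k\in\mathbb C$), then $\mathfrak{aff}(A)$ is $k$-step nilpotent and the structures $J(a,b)=(b,-a)$, $K(a,b)=(ia,-ib)$ form an abelian hypercomplex structure on it.
   Context: For a commutative associative algebra $A$ (viewed as a real algebra), $\mathfrak{aff}(A)$ is the real Lie algebra $A\oplus A$ with bracket $[(a,b),(a',b')]=(0,ab'-a'b)$. An abelian complex structure on a real Lie algebra is a linear map $J$ with $J^2=-\mathrm{Id}$ and $[Jx,Jy]=[x,y]$ for all $x,y$; an abelian hypercomplex structure is a pair of anticommuting abelian complex structures. A Lie algebra is $k$-step nilpotent if its lower central series $\mathfrak g^{1}=\mathfrak g$, $\mathfrak g^{j+1}=[\mathfrak g,\mathfrak g^j]$ satisfies $\mathfrak g^{k+1}=0\ne\mathfrak g^{k}$. *)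

theory Defs
  imports Complex_Main
begin

text \<open>Complex matrices are represented as functions nat => nat => complex; a
(k+1) x (k+1) matrix uses the indices 0..k and is zero outside that range.\<close>

type_synonym cmat = "nat \<Rightarrow> nat \<Rightarrow> complex"
type_synonym affel = "cmat \<times> cmat"

definition toeplitz_A :: "nat \<Rightarrow> cmat set" where
  "toeplitz_A k = {M. \<exists>a :: nat \<Rightarrow> complex. \<forall>p q.
      M p q = (if p \<le> k \<and> q \<le> k \<and> p < q then a (q - p) else 0)}"

definition mmul :: "nat \<Rightarrow> cmat \<Rightarrow> cmat \<Rightarrow> cmat" where
  "mmul k M N = (\<lambda>p q. if p \<le> k \<and> q \<le> k then (\<Sum>r\<le>k. M p r * N r q) else 0)"

definition vzero :: affel where
  "vzero = ((\<lambda>p q. 0), (\<lambda>p q. 0))"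

definition vadd :: "affel \<Rightarrow> affel \<Rightarrow> affel" where
  "vadd x y = ((\<lambda>p q. fst x p q + fst y p q), (\<lambda>p q. snd x p q + snd y p q))"

definition vscale :: "real \<Rightarrow> affel \<Rightarrow> affel" where
  "vscale c x = ((\<lambda>p q. of_real c * fst x p q), (\<lambda>p q. of_real c * snd x p q))"

definition vneg :: "affel \<Rightarrow> affel" where
  "vneg x = vscale (-1) x"

definition rspan :: "affel set \<Rightarrow> affel set" where
  "rspan S = {v. \<exists>(n::nat) (c :: nat \<Rightarrow> real) (u :: nat \<Rightarrow> affel). (\<forall>i<n. u i \<in> S) \<and>
      v = ((\<lambda>p q. \<Sum>i<n. of_real (c i) * fst (u i) p q),
           (\<lambda>p q. \<Sum>i<n. of_real (c i) * snd (u i) p q))}"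

definition aff_carrier :: "nat \<Rightarrow> affel set" where
  "aff_carrier k = toeplitz_A k \<times> toeplitz_A k"

definition aff_br :: "nat \<Rightarrow> affel \<Rightarrow> affel \<Rightarrow> affel" where
  "aff_br k x y = ((\<lambda>p q. 0),
      (\<lambda>p q. mmul k (fst x) (snd y) p q - mmul k (fst y) (snd x) p q))"

definition real_lie_algebra :: "affel set \<Rightarrow> (affel \<Rightarrow> affel \<Rightarrow> affel) \<Rightarrow> bool" where
  "real_lie_algebra V br \<longleftrightarrow>
     rspan V = V \<and>
     (\<forall>x\<in>V. \<forall>y\<in>V. br x y \<in> V) \<and>
     (\<forall>x\<in>V. \<forall>y\<in>V. \<forall>z\<in>V. \<forall>a b. br (vadd (vscale a x) (vscale b y)) z
                                    = vadd (vscale a (br x z)) (vscale b (br y z))) \<and>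
     (\<forall>x\<in>V. \<forall>y\<in>V. \<forall>z\<in>V. \<forall>a b. br z (vadd (vscale a x) (vscale b y))
                                    = vadd (vscale a (br z x)) (vscale b (br z y))) \<and>
     (\<forall>x\<in>V. br x x = vzero) \<and>
     (\<forall>x\<in>V. \<forall>y\<in>V. \<forall>z\<in>V.
        vadd (vadd (br x (br y z)) (br y (br z x))) (br z (br x y)) = vzero)"

definition finite_dim :: "affel set \<Rightarrow> bool" where
  "finite_dim V \<longleftrightarrow> (\<exists>B. finite B \<and> B \<subseteq> V \<and> rspan B = V)"

text \<open>Lower central series, shifted by one: lcs br V j is g^(j+1), i.e.
lcs br V 0 = g^1 = g and lcs br V (j+1) = [g, lcs br V j] (real span).\<close>
fun lcs :: "(affel \<Rightarrow> affel \<Rightarrow> affel) \<Rightarrow> affel set \<Rightarrow> nat \<Rightarrow> affel set" where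
  "lcs br V 0 = V"
| "lcs br V (Suc j) = rspan {br x y | x y. x \<in> V \<and> y \<in> lcs br V j}"

definition k_step_nilpotent :: "(affel \<Rightarrow> affel \<Rightarrow> affel) \<Rightarrow> affel set \<Rightarrow> nat \<Rightarrow> bool" where
  "k_step_nilpotent br V k \<longleftrightarrow> 1 \<le> k \<and> lcs br V k = {vzero} \<and> lcs br V (k - 1) \<noteq> {vzero}"

definition real_linear_on :: "affel set \<Rightarrow> (affel \<Rightarrow> affel) \<Rightarrow> bool" where
  "real_linear_on V J \<longleftrightarrow> (\<forall>x\<in>V. J x \<in> V) \<and>
     (\<forall>x\<in>V. \<forall>y\<in>V. \<forall>a b. J (vadd (vscale a x) (vscale b y)) = vadd (vscale a (J x)) (vscale b (J y)))"

definition abelian_complex_structure ::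
  "affel set \<Rightarrow> (affel \<Rightarrow> affel \<Rightarrow> affel) \<Rightarrow> (affel \<Rightarrow> affel) \<Rightarrow> bool" where
  "abelian_complex_structure V br J \<longleftrightarrow> real_linear_on V J \<and>
     (\<forall>x\<in>V. J (J x) = vneg x) \<and>
     (\<forall>x\<in>V. \<forall>y\<in>V. br (J x) (J y) = br x y)"

definition abelian_hypercomplex_structure ::
  "affel set \<Rightarrow> (affel \<Rightarrow> affel \<Rightarrow> affel) \<Rightarrow> (affel \<Rightarrow> affel) \<Rightarrow> (affel \<Rightarrow> affel) \<Rightarrow> bool" where
  "abelian_hypercomplex_structure V br J K \<longleftrightarrow>
     abelian_complex_structure V br J \<and> abelian_complex_structure V br K \<and>
     (\<forall>x\<in>V. J (K x) = vneg (K (J x)))"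

definition Jaff :: "affel \<Rightarrow> affel" where
  "Jaff x = (snd x, (\<lambda>p q. - fst x p q))"

definition Kaff :: "affel \<Rightarrow> affel" where
  "Kaff x = ((\<lambda>p q. \<i> * fst x p q), (\<lambda>p q. - \<i> * snd x p q))"

end

theory Submission
  imports Defs
begin

text \<open>The Toeplitz matrix with symbol a is the sum of the a j N^j for the nilpotent shift N,
so A is the truncated polynomial algebra t C[t]/(t^(k+1)): the product of two such matrices
is the Toeplitz matrix of the convolution of their symbols. Commutativity and associativity
of A give the Lie algebra axioms for aff(A) and make J and K abelian (K rescales the two
factors of every product by i and -i). The bracket takes values in 0 x A, and bracketing
with an element whose components vanish on the diagonals q \<le> p + j yields one vanishing
on q \<le> p + j + 1. Hence g^(j+1) vanishes on the diagonals q \<le> p + j, so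
g^(k+1) = 0, whereas bracketing (N, 0) repeatedly with (0, N) produces (0, N^k) in g^k.\<close>

section \<open>Upper triangular Toeplitz matrices\<close>

definition toeplitz :: "nat \<Rightarrow> (nat \<Rightarrow> complex) \<Rightarrow> cmat" where
  "toeplitz k a = (\<lambda>p q. if p \<le> k \<and> q \<le> k \<and> p < q then a (q - p) else 0)"

text \<open>The value of a symbol at 0 is irrelevant (the diagonal is zero), so the
convolution only runs over the strictly intermediate indices.\<close>
definition symbol_conv :: "(nat \<Rightarrow> complex) \<Rightarrow> (nat \<Rightarrow> complex) \<Rightarrow> nat \<Rightarrow> complex" where
  "symbol_conv a b m = (\<Sum>j\<in>{0<..<m}. a j * b (m - j))"

lemma toeplitz_A_eq_range: "toeplitz_A k = range (toeplitz k)"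
  unfolding toeplitz_A_def toeplitz_def by (auto simp: fun_eq_iff)

lemma toeplitz_in_toeplitz_A [simp]: "toeplitz k a \<in> toeplitz_A k"
  by (simp add: toeplitz_A_eq_range)

lemma toeplitz_AE:
  assumes "M \<in> toeplitz_A k"
  obtains a where "M = toeplitz k a"
  using assms by (auto simp: toeplitz_A_eq_range)

lemma symbol_conv_commute: "symbol_conv a b = symbol_conv b a"
proof
  fix m
  show "symbol_conv a b m = symbol_conv b a m"
    unfolding symbol_conv_def
    by (rule sum.reindex_bij_witness[where i="\<lambda>j. m - j" and j="\<lambda>j. m - j"]) auto
qed

lemma mmul_toeplitz: "mmul k (toeplitz k a) (toeplitz k b) = toeplitz k (symbol_conv a b)"
proof (intro ext)
  fix p q
  show "mmul k (toeplitz k a) (toeplitz k b) p q = toeplitz k (symbol_conv a b) p q"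
  proof (cases "p \<le> k \<and> q \<le> k")
    case in_range: True
    have "mmul k (toeplitz k a) (toeplitz k b) p q =
        (\<Sum>r\<le>k. if r \<in> {p<..<q} then a (r - p) * b (q - r) else 0)"
      using in_range unfolding mmul_def toeplitz_def by (auto intro: sum.cong)
    also have "\<dots> = (\<Sum>r\<in>{p<..<q}. a (r - p) * b (q - r))"
      using in_range by (subst sum.inter_restrict[symmetric]) (auto intro: sum.cong)
    also have "\<dots> = (\<Sum>j\<in>{0<..<q - p}. a j * b (q - p - j))"
      by (rule sum.reindex_bij_witness[where i="\<lambda>j. j + p" and j="\<lambda>r. r - p"]) auto
    also have "\<dots> = toeplitz k (symbol_conv a b) p q"
      using in_range by (simp add: toeplitz_def symbol_conv_def)
    finally show ?thesis .
  qed (auto simp: mmul_def toeplitz_def)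
qed

lemma mmul_commute_toeplitz_A:
  "M \<in> toeplitz_A k \<Longrightarrow> N \<in> toeplitz_A k \<Longrightarrow> mmul k M N = mmul k N M"
  by (metis toeplitz_AE mmul_toeplitz symbol_conv_commute)

lemma mmul_assoc: "mmul k (mmul k L M) N = mmul k L (mmul k M N)"
  unfolding mmul_def
  by (auto simp: fun_eq_iff sum_distrib_left sum_distrib_right mult.assoc intro: sum.swap)

lemma mmul_lincomb_left:
  "mmul k (\<lambda>p q. c * M p q + d * N p q) L = (\<lambda>p q. c * mmul k M L p q + d * mmul k N L p q)"
  unfolding mmul_def by (auto simp: fun_eq_iff sum.distrib sum_distrib_left algebra_simps)

lemma mmul_lincomb_right:
  "mmul k L (\<lambda>p q. c * M p q + d * N p q) = (\<lambda>p q. c * mmul k L M p q + d * mmul k L N p q)"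
  unfolding mmul_def by (auto simp: fun_eq_iff sum.distrib sum_distrib_left algebra_simps)

lemma mmul_diff_right: "mmul k L (\<lambda>p q. M p q - N p q) = (\<lambda>p q. mmul k L M p q - mmul k L N p q)"
  unfolding mmul_def by (auto simp: fun_eq_iff sum_subtractf algebra_simps)

lemma mmul_scale_left: "mmul k (\<lambda>p q. c * M p q) N = (\<lambda>p q. c * mmul k M N p q)"
  unfolding mmul_def by (auto simp: fun_eq_iff sum_distrib_left algebra_simps)

lemma mmul_scale_right: "mmul k M (\<lambda>p q. c * N p q) = (\<lambda>p q. c * mmul k M N p q)"
  unfolding mmul_def by (auto simp: fun_eq_iff sum_distrib_left algebra_simps)

lemma mmul_neg_left: "mmul k (\<lambda>p q. - M p q) N = (\<lambda>p q. - mmul k M N p q)"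
  unfolding mmul_def by (auto simp: fun_eq_iff sum_negf)

lemma mmul_neg_right: "mmul k M (\<lambda>p q. - N p q) = (\<lambda>p q. - mmul k M N p q)"
  unfolding mmul_def by (auto simp: fun_eq_iff sum_negf)

lemma mmul_zero_left [simp]: "mmul k (\<lambda>p q. 0) M = (\<lambda>p q. 0)"
  unfolding mmul_def by (simp add: fun_eq_iff)

lemma toeplitz_A_sum:
  fixes M :: "nat \<Rightarrow> cmat"
  assumes "\<forall>i<n. M i \<in> toeplitz_A k"
  shows "(\<lambda>p q. \<Sum>i<n. c i * M i p q) \<in> toeplitz_A k"
proof -
  have "\<forall>i<n. \<exists>a. M i = toeplitz k a"
    using assms by (auto simp: toeplitz_A_eq_range)
  then obtain a where "\<forall>i<n. M i = toeplitz k (a i)"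
    by metis
  then have "(\<lambda>p q. \<Sum>i<n. c i * M i p q) = toeplitz k (\<lambda>m. \<Sum>i<n. c i * a i m)"
    by (auto simp: toeplitz_def fun_eq_iff)
  then show ?thesis by simp
qed

lemma toeplitz_A_lincomb:
  assumes "M \<in> toeplitz_A k" "N \<in> toeplitz_A k"
  shows "(\<lambda>p q. c * M p q + d * N p q) \<in> toeplitz_A k"
proof -
  obtain a b where "M = toeplitz k a" "N = toeplitz k b"
    using assms by (metis toeplitz_AE)
  then have "(\<lambda>p q. c * M p q + d * N p q) = toeplitz k (\<lambda>m. c * a m + d * b m)"
    by (auto simp: toeplitz_def fun_eq_iff)
  then show ?thesis by simp
qed

lemma toeplitz_zero [simp]: "toeplitz k (\<lambda>_. 0) = (\<lambda>p q. 0)"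
  by (simp add: toeplitz_def fun_eq_iff)

lemma toeplitz_A_zero: "(\<lambda>p q. 0) \<in> toeplitz_A k"
  using toeplitz_in_toeplitz_A[of k "\<lambda>_. 0"] by simp

lemma toeplitz_A_scale: "M \<in> toeplitz_A k \<Longrightarrow> (\<lambda>p q. c * M p q) \<in> toeplitz_A k"
  using toeplitz_A_lincomb[of M k M c 0] by simp

lemma toeplitz_A_neg: "M \<in> toeplitz_A k \<Longrightarrow> (\<lambda>p q. - M p q) \<in> toeplitz_A k"
  using toeplitz_A_scale[of M k "-1"] by simp

lemma toeplitz_A_diff:
  "M \<in> toeplitz_A k \<Longrightarrow> N \<in> toeplitz_A k \<Longrightarrow> (\<lambda>p q. M p q - N p q) \<in> toeplitz_A k"
  using toeplitz_A_lincomb[of M k N 1 "-1"] by simp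

lemma toeplitz_A_mmul: "M \<in> toeplitz_A k \<Longrightarrow> N \<in> toeplitz_A k \<Longrightarrow> mmul k M N \<in> toeplitz_A k"
  by (metis toeplitz_AE mmul_toeplitz toeplitz_in_toeplitz_A)

lemma toeplitz_A_lower_zero: "M \<in> toeplitz_A k \<Longrightarrow> q \<le> p \<Longrightarrow> M p q = 0"
  by (auto elim: toeplitz_AE simp: toeplitz_def)

lemma toeplitz_A_outside_zero: "M \<in> toeplitz_A k \<Longrightarrow> k < q \<Longrightarrow> M p q = 0"
  by (auto elim: toeplitz_AE simp: toeplitz_def)

lemma mem_aff_carrier_iff:
  "x \<in> aff_carrier k \<longleftrightarrow> fst x \<in> toeplitz_A k \<and> snd x \<in> toeplitz_A k"
  by (simp add: aff_carrier_def mem_Times_iff)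

section \<open>Real linear spans\<close>

definition rcomb :: "nat \<Rightarrow> (nat \<Rightarrow> real) \<Rightarrow> (nat \<Rightarrow> affel) \<Rightarrow> affel" where
  "rcomb n c u = ((\<lambda>p q. \<Sum>i<n. of_real (c i) * fst (u i) p q),
                  (\<lambda>p q. \<Sum>i<n. of_real (c i) * snd (u i) p q))"

lemma mem_rspan_iff: "v \<in> rspan S \<longleftrightarrow> (\<exists>n c u. (\<forall>i<n. u i \<in> S) \<and> v = rcomb n c u)"
  unfolding rspan_def rcomb_def by blast

lemma fst_rcomb [simp]: "fst (rcomb n c u) p q = (\<Sum>i<n. of_real (c i) * fst (u i) p q)"
  and snd_rcomb [simp]: "snd (rcomb n c u) p q = (\<Sum>i<n. of_real (c i) * snd (u i) p q)"
  by (simp_all add: rcomb_def)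

lemma sum_lessThan_add: "(\<Sum>i<m + (n::nat). f i) = (\<Sum>i<m. f i) + (\<Sum>i<n. f (i + m))"
  by (induction n) (simp_all add: ac_simps)

lemma vadd_rcomb:
  "vadd (rcomb m c u) (rcomb n d w) =
     rcomb (m + n) (\<lambda>i. if i < m then c i else d (i - m)) (\<lambda>i. if i < m then u i else w (i - m))"
  by (simp add: rcomb_def vadd_def sum_lessThan_add)

lemma vscale_rcomb: "vscale a (rcomb n c u) = rcomb n (\<lambda>i. a * c i) u"
  by (simp add: rcomb_def vscale_def sum_distrib_left mult.assoc)

lemma rspan_superset: "x \<in> S \<Longrightarrow> x \<in> rspan S"
  unfolding mem_rspan_iff
  by (rule exI[of _ 1], rule exI[of _ "\<lambda>_. 1"], rule exI[of _ "\<lambda>_. x"]) (simp add: rcomb_def)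

lemma rspan_vzero: "vzero \<in> rspan S"
  unfolding mem_rspan_iff by (rule exI[of _ 0]) (simp add: rcomb_def vzero_def)

lemma rspan_mono: "S \<subseteq> T \<Longrightarrow> rspan S \<subseteq> rspan T"
  unfolding rspan_def by blast

lemma rspan_vadd:
  assumes "x \<in> rspan S" "y \<in> rspan S"
  shows "vadd x y \<in> rspan S"
proof -
  obtain m c u n d w where u: "\<forall>i<m. u i \<in> S" and x: "x = rcomb m c u"
    and w: "\<forall>i<n. w i \<in> S" and y: "y = rcomb n d w"
    using assms unfolding mem_rspan_iff by blast
  show ?thesis
    unfolding mem_rspan_iff x y vadd_rcomb
    by (rule exI, rule exI, rule exI, rule conjI[OF _ refl]) (use u w in auto)
qed

lemma rspan_vscale: "x \<in> rspan S \<Longrightarrow> vscale a x \<in> rspan S"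
  unfolding mem_rspan_iff by (metis vscale_rcomb)

lemma rspan_sum:
  assumes "finite I" and "\<forall>i\<in>I. f i \<in> rspan S"
  shows "((\<lambda>p q. \<Sum>i\<in>I. fst (f i) p q), (\<lambda>p q. \<Sum>i\<in>I. snd (f i) p q)) \<in> rspan S"
  using assms
proof (induction I rule: finite_induct)
  case empty
  then show ?case using rspan_vzero by (simp add: vzero_def)
next
  case (insert i I)
  then have "vadd (f i) ((\<lambda>p q. \<Sum>i\<in>I. fst (f i) p q), (\<lambda>p q. \<Sum>i\<in>I. snd (f i) p q)) \<in> rspan S"
    by (intro rspan_vadd) auto
  then show ?case using insert by (simp add: vadd_def)
qed

lemma rspan_entry_zero:
  assumes "v \<in> rspan S" and "\<forall>u\<in>S. fst u p q = 0 \<and> snd u p q = 0"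
  shows "fst v p q = 0 \<and> snd v p q = 0"
  using assms unfolding mem_rspan_iff by auto

lemma rspan_aff_carrier: "rspan (aff_carrier k) = aff_carrier k"
proof
  show "aff_carrier k \<subseteq> rspan (aff_carrier k)"
    using rspan_superset by blast
  show "rspan (aff_carrier k) \<subseteq> aff_carrier k"
    by (auto simp: mem_rspan_iff mem_aff_carrier_iff rcomb_def intro!: toeplitz_A_sum)
qed

section \<open>The Lie algebra aff(A) and its hypercomplex structure\<close>

lemma aff_br_closed:
  "x \<in> aff_carrier k \<Longrightarrow> y \<in> aff_carrier k \<Longrightarrow> aff_br k x y \<in> aff_carrier k"
  by (simp add: mem_aff_carrier_iff aff_br_def toeplitz_A_zero toeplitz_A_diff toeplitz_A_mmul)

lemma aff_br_lincomb_left: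
  "aff_br k (vadd (vscale a x) (vscale b y)) z = vadd (vscale a (aff_br k x z)) (vscale b (aff_br k y z))"
  by (simp add: aff_br_def vadd_def vscale_def mmul_lincomb_left mmul_lincomb_right
      fun_eq_iff right_diff_distrib)

lemma aff_br_lincomb_right:
  "aff_br k z (vadd (vscale a x) (vscale b y)) = vadd (vscale a (aff_br k z x)) (vscale b (aff_br k z y))"
  by (simp add: aff_br_def vadd_def vscale_def mmul_lincomb_left mmul_lincomb_right
      fun_eq_iff right_diff_distrib)

lemma aff_br_self: "aff_br k x x = vzero"
  by (simp add: aff_br_def vzero_def)

text \<open>Brackets have zero first component, so [x, [y, z]] = (0, a_x (a_y b_z - a_z b_y))
and the six products in the Jacobi sum cancel in pairs.\<close>
lemma aff_br_jacobi:
  assumes "x \<in> aff_carrier k" "y \<in> aff_carrier k" "z \<in> aff_carrier k"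
  shows "vadd (vadd (aff_br k x (aff_br k y z)) (aff_br k y (aff_br k z x))) (aff_br k z (aff_br k x y))
      = vzero"
proof -
  have swap: "mmul k M (mmul k N L) = mmul k N (mmul k M L)"
    if "M \<in> toeplitz_A k" "N \<in> toeplitz_A k" for M N L
    using that by (metis mmul_assoc mmul_commute_toeplitz_A)
  have "fst x \<in> toeplitz_A k" "fst y \<in> toeplitz_A k" "fst z \<in> toeplitz_A k"
    using assms by (simp_all add: mem_aff_carrier_iff)
  then show ?thesis
    using swap[of "fst x" "fst y"] swap[of "fst x" "fst z"] swap[of "fst y" "fst z"]
    by (simp add: aff_br_def vadd_def vzero_def mmul_diff_right)
qed

lemma real_lie_algebra_aff: "real_lie_algebra (aff_carrier k) (aff_br k)"
  unfolding real_lie_algebra_def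
  by (simp add: rspan_aff_carrier aff_br_closed aff_br_lincomb_left aff_br_lincomb_right
      aff_br_self aff_br_jacobi)

lemma real_linear_on_Jaff: "real_linear_on (aff_carrier k) Jaff"
  unfolding real_linear_on_def
  by (simp add: mem_aff_carrier_iff Jaff_def vadd_def vscale_def fun_eq_iff algebra_simps
      toeplitz_A_neg)

lemma real_linear_on_Kaff: "real_linear_on (aff_carrier k) Kaff"
  unfolding real_linear_on_def
  by (simp add: mem_aff_carrier_iff Kaff_def vadd_def vscale_def fun_eq_iff algebra_simps
      toeplitz_A_scale toeplitz_A_neg)

lemma abelian_complex_structure_Jaff: "abelian_complex_structure (aff_carrier k) (aff_br k) Jaff"
  unfolding abelian_complex_structure_def
proof (intro conjI ballI real_linear_on_Jaff)
  fix x y assume "x \<in> aff_carrier k" "y \<in> aff_carrier k"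
  then show "aff_br k (Jaff x) (Jaff y) = aff_br k x y"
    unfolding mem_aff_carrier_iff
    by (simp add: Jaff_def aff_br_def mmul_neg_left mmul_neg_right fun_eq_iff
        mmul_commute_toeplitz_A[of "fst x" k "snd y"] mmul_commute_toeplitz_A[of "snd x" k "fst y"])
qed (simp add: Jaff_def vneg_def vscale_def)

lemma abelian_complex_structure_Kaff: "abelian_complex_structure (aff_carrier k) (aff_br k) Kaff"
  unfolding abelian_complex_structure_def
  by (simp add: real_linear_on_Kaff Kaff_def vneg_def vscale_def aff_br_def mmul_scale_left
      mmul_scale_right mmul_neg_left mmul_neg_right fun_eq_iff)

lemma abelian_hypercomplex_structure_aff:
  "abelian_hypercomplex_structure (aff_carrier k) (aff_br k) Jaff Kaff"
  unfolding abelian_hypercomplex_structure_def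
  by (simp add: abelian_complex_structure_Jaff abelian_complex_structure_Kaff
      Jaff_def Kaff_def vneg_def vscale_def)

section \<open>Dimension and nilpotency\<close>

definition aff_unit :: "nat \<Rightarrow> nat \<Rightarrow> complex \<Rightarrow> complex \<Rightarrow> affel" where
  "aff_unit k j c d = (toeplitz k ((\<lambda>_. 0)(j := c)), toeplitz k ((\<lambda>_. 0)(j := d)))"

lemma aff_unit_in_aff_carrier [simp]: "aff_unit k j c d \<in> aff_carrier k"
  by (simp add: mem_aff_carrier_iff aff_unit_def)

lemma toeplitz_eq_sum_units: "toeplitz k a p q = (\<Sum>j\<in>{1..k}. toeplitz k ((\<lambda>_. 0)(j := a j)) p q)"
  by (cases "p \<le> k \<and> q \<le> k \<and> p < q") (auto simp: toeplitz_def)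

lemma aff_unit_real_decomp:
  "aff_unit k j c d =
     vadd (vadd (vscale (Re c) (aff_unit k j 1 0)) (vscale (Im c) (aff_unit k j \<i> 0)))
          (vadd (vscale (Re d) (aff_unit k j 0 1)) (vscale (Im d) (aff_unit k j 0 \<i>)))"
  by (simp add: aff_unit_def vadd_def vscale_def toeplitz_def fun_eq_iff complex_eq_iff)

lemma finite_dim_aff: "finite_dim (aff_carrier k)"
proof -
  define B where "B = (\<lambda>(j, c, d). aff_unit k j c d) ` ({1..k} \<times> {(1, 0), (\<i>, 0), (0, 1), (0, \<i>)})"
  have B: "finite B" "B \<subseteq> aff_carrier k"
    by (auto simp: B_def)
  have unit_in_B: "aff_unit k j c d \<in> B" if "j \<in> {1..k}" "(c, d) \<in> {(1, 0), (\<i>, 0), (0, 1), (0, \<i>)}"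
    for j c d
    unfolding B_def using that by (intro image_eqI[where x = "(j, c, d)"]) auto
  have "x \<in> rspan B" if "x \<in> aff_carrier k" for x
  proof -
    obtain a b where x: "x = (toeplitz k a, toeplitz k b)"
      using \<open>x \<in> aff_carrier k\<close> by (metis toeplitz_AE mem_aff_carrier_iff prod.collapse)
    have "aff_unit k j (a j) (b j) \<in> rspan B" if "j \<in> {1..k}" for j
      using that
      by (subst aff_unit_real_decomp, intro rspan_vadd rspan_vscale rspan_superset unit_in_B) auto
    moreover have "x = ((\<lambda>p q. \<Sum>j\<in>{1..k}. fst (aff_unit k j (a j) (b j)) p q),
                        (\<lambda>p q. \<Sum>j\<in>{1..k}. snd (aff_unit k j (a j) (b j)) p q))"
      by (simp add: x aff_unit_def fun_eq_iff toeplitz_eq_sum_units[of k a]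
          toeplitz_eq_sum_units[of k b])
    ultimately show ?thesis
      using rspan_sum[of "{1..k}"] by simp
  qed
  then have "rspan B = aff_carrier k"
    using rspan_mono[OF B(2)] rspan_aff_carrier by blast
  then show ?thesis
    unfolding finite_dim_def using B by blast
qed

definition aff_band :: "nat \<Rightarrow> nat \<Rightarrow> affel set" where
  "aff_band k j = {x \<in> aff_carrier k. \<forall>p q. q \<le> p + j \<longrightarrow> fst x p q = 0 \<and> snd x p q = 0}"

lemma aff_carrier_subset_band: "aff_carrier k \<subseteq> aff_band k 0"
  by (auto simp: aff_band_def mem_aff_carrier_iff toeplitz_A_lower_zero)

lemma rspan_aff_band: "S \<subseteq> aff_band k j \<Longrightarrow> rspan S \<subseteq> aff_band k j"
  using rspan_mono[of S "aff_carrier k"] rspan_aff_carrier[of k] rspan_entry_zero[of _ S]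
  unfolding aff_band_def by blast

text \<open>Multiplying by a strictly upper triangular matrix, on either side, moves the
band of vanishing diagonals one step further from the diagonal.\<close>
lemma aff_br_band:
  assumes x: "x \<in> aff_carrier k" and y: "y \<in> aff_band k j"
  shows "aff_br k x y \<in> aff_band k (Suc j)"
proof -
  have y_zero: "fst y p q = 0 \<and> snd y p q = 0" if "q \<le> p + j" for p q
    using y that by (auto simp: aff_band_def)
  have "mmul k (fst x) (snd y) p q = 0 \<and> mmul k (fst y) (snd x) p q = 0" if "q \<le> p + Suc j" for p q
  proof -
    have "fst x p r * snd y r q = 0" for r
      using x toeplitz_A_lower_zero[of "fst x" k r p] y_zero[of q r] that
      by (cases "r \<le> p") (auto simp: mem_aff_carrier_iff)
    moreover have "fst y p r * snd x r q = 0" for r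
      using x toeplitz_A_lower_zero[of "snd x" k q r] y_zero[of r p] that
      by (cases "r \<le> p + j") (auto simp: mem_aff_carrier_iff)
    ultimately show ?thesis
      by (simp add: mmul_def del: mult_eq_0_iff)
  qed
  moreover have "aff_br k x y \<in> aff_carrier k"
    using x y by (intro aff_br_closed) (auto simp: aff_band_def)
  ultimately show ?thesis
    by (auto simp: aff_band_def aff_br_def)
qed

lemma lcs_aff_subset_band: "lcs (aff_br k) (aff_carrier k) j \<subseteq> aff_band k j"
proof (induction j)
  case 0
  then show ?case using aff_carrier_subset_band by simp
next
  case (Suc j)
  then show ?case
    unfolding lcs.simps by (intro rspan_aff_band) (use aff_br_band in blast)
qed

lemma aff_band_top: "aff_band k k \<subseteq> {vzero}"
proof
  fix x assume x: "x \<in> aff_band k k"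
  have "fst x p q = 0 \<and> snd x p q = 0" for p q
    using x toeplitz_A_outside_zero[of "fst x" k q p] toeplitz_A_outside_zero[of "snd x" k q p]
    by (cases "q \<le> k") (auto simp: aff_band_def mem_aff_carrier_iff)
  then show "x \<in> {vzero}"
    by (simp add: vzero_def prod_eq_iff fun_eq_iff)
qed

lemma symbol_conv_units:
  assumes "0 < i" "0 < j"
  shows "symbol_conv ((\<lambda>_. 0)(i := a)) ((\<lambda>_. 0)(j := b)) = (\<lambda>_. 0)(i + j := a * b)"
proof
  fix m
  have "symbol_conv ((\<lambda>_. 0)(i := a)) ((\<lambda>_. 0)(j := b)) m =
      (\<Sum>l\<in>{0<..<m}. if l = i then (if m = i + j then a * b else 0) else 0)"
    unfolding symbol_conv_def using assms by (intro sum.cong) auto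
  also have "\<dots> = ((\<lambda>_. 0)(i + j := a * b)) m"
    using assms by simp
  finally show "symbol_conv ((\<lambda>_. 0)(i := a)) ((\<lambda>_. 0)(j := b)) m = ((\<lambda>_. 0)(i + j := a * b)) m" .
qed

lemma aff_unit_in_lcs: "aff_unit k (Suc j) 0 1 \<in> lcs (aff_br k) (aff_carrier k) j"
proof (induction j)
  case 0
  then show ?case by simp
next
  case (Suc j)
  have zero_upd: "(\<lambda>_. 0)(n := 0) = (\<lambda>_::nat. 0::complex)" for n
    by (simp add: fun_eq_iff)
  have "aff_br k (aff_unit k 1 1 0) (aff_unit k (Suc j) 0 1) = aff_unit k (Suc (Suc j)) 0 1"
    by (simp add: aff_br_def aff_unit_def mmul_toeplitz symbol_conv_units zero_upd)
  then show ?case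
    unfolding lcs.simps using Suc aff_unit_in_aff_carrier
    by (metis (mono_tags, lifting) mem_Collect_eq rspan_superset)
qed

lemma aff_unit_nonzero:
  assumes "0 < j" "j \<le> k" "d \<noteq> 0"
  shows "aff_unit k j 0 d \<noteq> vzero"
proof
  assume "aff_unit k j 0 d = vzero"
  then have "snd (aff_unit k j 0 d) 0 j = 0"
    by (simp add: vzero_def)
  then show False
    using assms by (simp add: aff_unit_def toeplitz_def)
qed

lemma k_step_nilpotent_aff:
  assumes "1 \<le> k"
  shows "k_step_nilpotent (aff_br k) (aff_carrier k) k"
proof -
  have "lcs (aff_br k) (aff_carrier k) k = {vzero}"
    using lcs_aff_subset_band[of k k] aff_band_top[of k] rspan_vzero assms
    by (cases k) auto
  moreover have "aff_unit k k 0 1 \<in> lcs (aff_br k) (aff_carrier k) (k - 1)"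
    using aff_unit_in_lcs[of k "k - 1"] assms by simp
  ultimately show ?thesis
    unfolding k_step_nilpotent_def using assms aff_unit_nonzero[of k k 1] by auto
qed

theorem mainTheorem10:
  fixes k :: nat
  assumes "1 \<le> k"
  shows "real_lie_algebra (aff_carrier k) (aff_br k)
       \<and> finite_dim (aff_carrier k)
       \<and> k_step_nilpotent (aff_br k) (aff_carrier k) k
       \<and> abelian_hypercomplex_structure (aff_carrier k) (aff_br k) Jaff Kaff"
  using real_lie_algebra_aff finite_dim_aff k_step_nilpotent_aff[OF assms]
    abelian_hypercomplex_structure_aff
  by blast

end
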